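(* Let $P$ be the feasible set of the rational mixed-integer program $\min\{c^Tx : Ax\le b,\ \ell\le x\le u,\ x_j\in\mathbb{Z} \text{ for all } j\in I\}$, where $A\in\mathbb{Q}^{m\times n}$, $c\in\mathbb{Q}^n$, $b\in\mathbb{Q}^m$, $\ell,u\in(\mathbb{Q}\cup\{\pm\infty\})^n$, $I\subseteq\{1,\dots,n\}$. Let $a^Tx\le \beta$ and $g^Tx\le d$ be two valid, $\mathbb{F}$-representable inequalities for $P$, and let $\lambda\in\mathbb{F}$ with $\lambda>0$. Set $\alpha_i:=a_i+\lambda g_i$ for $i=1,\dots,n$, and let $U,L\subseteq\{1,\dots,n\}$ be disjoint index sets such that $u_i<\infty$ for all $i\in U$, $\ell_i>-\infty$ for all $i\in L$, and $\alpha_i=0$ for all $i\notin U\cup L$. Then the inequality $$\sum_{i\in U}\overline{\alpha_i}\,x_i+\sum_{i\in L}\underline{\alpha_i}\,x_i\;\le\;\overline{\beta+\lambda d+\sum_{i\in U,\,u_i>0}(\overline{\alpha_i}-\underline{\alpha_i})\,u_i+\sum_{i\in L,\,\ell_i<0}(\underline{\alpha_i}-\overline{\alpha_i})\,\ell_i}$$ is an $\mathbb{F}$-representable inequality valid for $P$ (a valid approximation of the aggregated inequality $(a+\lambda g)^Tx\le \beta+\lambda d$).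
   Context: An inequality is valid for $P$ if every point of $P$ satisfies it. $\mathbb{F}\subseteq\mathbb{Q}$ denotes a fixed set of floating-point numbers (e.g. IEEE double-precision numbers). For $x\in\mathbb{Q}$, $\overline{x}:=\min\{y\in\mathbb{F}: y>x\}$ and $\underline{x}:=\max\{y\in\mathbb{F}: y<x\}$ (assumed to exist for all numbers occurring). An inequality $a^Tx\le\beta$ is $\mathbb{F}$-representable if $a\in\mathbb{F}^n$ and $\beta\in\mathbb{F}$. *)

theory Defs
  imports Complex_Main "HOL-Library.Extended"
begin

(* Extended rationals Q \<union> {+\<infinity>,-\<infinity>} are modelled by rat extended
   (Fin r | Pinf | Minf, ordered Minf < Fin r < Pinf). *)

fun fin_val :: "rat extended \<Rightarrow> rat" where
  "fin_val (Fin r) = r"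
| "fin_val Pinf = 0"
| "fin_val Minf = 0"

definition mip_feasible ::
  "nat \<Rightarrow> nat \<Rightarrow> (nat \<Rightarrow> nat \<Rightarrow> rat) \<Rightarrow> (nat \<Rightarrow> rat) \<Rightarrow> (nat \<Rightarrow> rat extended)
   \<Rightarrow> (nat \<Rightarrow> rat extended) \<Rightarrow> nat set \<Rightarrow> (nat \<Rightarrow> rat) set" where
  "mip_feasible m n A b l u I =
     {x. (\<forall>k\<in>{1..m}. (\<Sum>j=1..n. A k j * x j) \<le> b k)
       \<and> (\<forall>j\<in>{1..n}. l j \<le> Fin (x j) \<and> Fin (x j) \<le> u j)
       \<and> (\<forall>j\<in>I. x j \<in> \<int>)}"

definition valid_ineq :: "nat \<Rightarrow> (nat \<Rightarrow> rat) set \<Rightarrow> (nat \<Rightarrow> rat) \<Rightarrow> rat \<Rightarrow> bool" where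
  "valid_ineq n P a \<beta> \<longleftrightarrow> (\<forall>x\<in>P. (\<Sum>i=1..n. a i * x i) \<le> \<beta>)"

definition F_representable :: "rat set \<Rightarrow> nat \<Rightarrow> (nat \<Rightarrow> rat) \<Rightarrow> rat \<Rightarrow> bool" where
  "F_representable F n a \<beta> \<longleftrightarrow> (\<forall>i\<in>{1..n}. a i \<in> F) \<and> \<beta> \<in> F"

(* overline x = min{y \<in> F. y > x},  underline x = max{y \<in> F. y < x} *)
definition has_fl_up :: "rat set \<Rightarrow> rat \<Rightarrow> bool" where
  "has_fl_up F x \<longleftrightarrow> (\<exists>y. y \<in> F \<and> x < y \<and> (\<forall>z\<in>F. x < z \<longrightarrow> y \<le> z))"

definition has_fl_down :: "rat set \<Rightarrow> rat \<Rightarrow> bool" where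
  "has_fl_down F x \<longleftrightarrow> (\<exists>y. y \<in> F \<and> y < x \<and> (\<forall>z\<in>F. z < x \<longrightarrow> z \<le> y))"

definition fl_up :: "rat set \<Rightarrow> rat \<Rightarrow> rat" where
  "fl_up F x = (THE y. y \<in> F \<and> x < y \<and> (\<forall>z\<in>F. x < z \<longrightarrow> y \<le> z))"

definition fl_down :: "rat set \<Rightarrow> rat \<Rightarrow> rat" where
  "fl_down F x = (THE y. y \<in> F \<and> y < x \<and> (\<forall>z\<in>F. z < x \<longrightarrow> z \<le> y))"

end

theory Submission
  imports Defs
begin

(* Adding lam times the second inequality to the first gives the valid aggregated
   inequality alpha^T x <= beta + lam d, alpha = a + lam g.  Replacing alpha_i by its upward
   rounding for i in U (downward for i in L) raises the left-hand side by at most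
   (up alpha_i - down alpha_i) max(u_i, 0), resp. (down alpha_i - up alpha_i) min(l_i, 0),
   on the box l <= x <= u; adding these errors and rounding the right-hand side up keeps the
   inequality valid, and all its coefficients lie in F by construction. *)

lemma fl_up_mem_gt:
  assumes "has_fl_up F x"
  shows "fl_up F x \<in> F" "x < fl_up F x"
proof -
  have "\<exists>!y. y \<in> F \<and> x < y \<and> (\<forall>z\<in>F. x < z \<longrightarrow> y \<le> z)"
    using assms unfolding has_fl_up_def by (auto intro: order.antisym)
  from theI'[OF this] show "fl_up F x \<in> F" "x < fl_up F x"
    unfolding fl_up_def by simp_all
qed

lemma fl_down_mem_lt:
  assumes "has_fl_down F x"
  shows "fl_down F x \<in> F" "fl_down F x < x"
proof -
  have "\<exists>!y. y \<in> F \<and> y < x \<and> (\<forall>z\<in>F. z < x \<longrightarrow> z \<le> y)"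
    using assms unfolding has_fl_down_def by (auto intro: order.antisym)
  from theI'[OF this] show "fl_down F x \<in> F" "fl_down F x < x"
    unfolding fl_down_def by simp_all
qed

lemma mip_feasible_bounds:
  assumes "x \<in> mip_feasible m n A b l u I" "j \<in> {1..n}"
  shows "l j \<le> Fin (x j)" "Fin (x j) \<le> u j"
  using assms unfolding mip_feasible_def by auto

lemma valid_ineq_aggregate:
  assumes "valid_ineq n P a \<beta>" "valid_ineq n P g d" "0 \<le> lam"
  shows "valid_ineq n P (\<lambda>i. a i + lam * g i) (\<beta> + lam * d)"
  unfolding valid_ineq_def
proof
  fix x assume "x \<in> P"
  then have "(\<Sum>i=1..n. a i * x i) \<le> \<beta>" "lam * (\<Sum>i=1..n. g i * x i) \<le> lam * d"
    using assms by (auto simp: valid_ineq_def intro: mult_left_mono)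
  then show "(\<Sum>i=1..n. (a i + lam * g i) * x i) \<le> \<beta> + lam * d"
    by (simp add: distrib_right sum.distrib sum_distrib_left mult.assoc)
qed

lemma valid_ineq_rhs_mono:
  assumes "valid_ineq n P a \<beta>" "\<beta> \<le> \<beta>'"
  shows "valid_ineq n P a \<beta>'"
  using assms unfolding valid_ineq_def by force

lemma valid_ineq_perturb:
  fixes c \<alpha> t :: "nat \<Rightarrow> rat"
  assumes "valid_ineq n P \<alpha> \<beta>"
    and "\<And>x i. x \<in> P \<Longrightarrow> i \<in> {1..n} \<Longrightarrow> c i * x i \<le> \<alpha> i * x i + t i"
  shows "valid_ineq n P c (\<beta> + (\<Sum>i=1..n. t i))"
  unfolding valid_ineq_def
proof
  fix x assume "x \<in> P"
  then have "(\<Sum>i=1..n. c i * x i) \<le> (\<Sum>i=1..n. \<alpha> i * x i + t i)"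
    using assms(2) by (intro sum_mono)
  also have "\<dots> \<le> \<beta> + (\<Sum>i=1..n. t i)"
    using assms(1) \<open>x \<in> P\<close> by (simp add: valid_ineq_def sum.distrib)
  finally show "(\<Sum>i=1..n. c i * x i) \<le> \<beta> + (\<Sum>i=1..n. t i)" .
qed

lemma round_up_coeff_le:
  fixes x \<alpha> lo hi :: rat and u :: "rat extended"
  assumes "lo \<le> \<alpha>" "\<alpha> \<le> hi" "Fin x \<le> u" "u < Pinf"
  shows "hi * x \<le> \<alpha> * x + (if u > Fin 0 then (hi - lo) * fin_val u else 0)"
proof -
  obtain r where u: "u = Fin r" using assms(3,4) by (cases u) auto
  have "(hi - \<alpha>) * x \<le> (hi - \<alpha>) * max r 0"
    using assms(2,3) u by (intro mult_left_mono) auto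
  also have "\<dots> \<le> (hi - lo) * max r 0"
    using assms(1) by (intro mult_right_mono) auto
  finally show ?thesis
    using u by (auto simp: algebra_simps max_def)
qed

lemma round_down_coeff_le:
  fixes x \<alpha> lo hi :: rat and l :: "rat extended"
  assumes "lo \<le> \<alpha>" "\<alpha> \<le> hi" "l \<le> Fin x" "Minf < l"
  shows "lo * x \<le> \<alpha> * x + (if l < Fin 0 then (lo - hi) * fin_val l else 0)"
proof -
  obtain r where l: "l = Fin r" using assms(3,4) by (cases l) auto
  have "(lo - \<alpha>) * x \<le> (lo - \<alpha>) * min r 0"
    using assms(1,3) l by (intro mult_left_mono_neg) auto
  also have "\<dots> \<le> (lo - hi) * min r 0"
    using assms(2) by (intro mult_right_mono_neg) auto
  finally show ?thesis
    using l by (cases "r < 0") (auto simp: algebra_simps min_absorb1 min_absorb2)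
qed

lemma valid_ineq_round_coeffs:
  fixes \<alpha> lo hi :: "nat \<Rightarrow> rat" and l u :: "nat \<Rightarrow> rat extended"
  assumes valid: "valid_ineq n P \<alpha> \<beta>"
    and bounds: "\<And>x j. x \<in> P \<Longrightarrow> j \<in> {1..n} \<Longrightarrow> l j \<le> Fin (x j) \<and> Fin (x j) \<le> u j"
    and UL: "U \<subseteq> {1..n}" "L \<subseteq> {1..n}" "U \<inter> L = {}"
    and Ufin: "\<forall>i\<in>U. u i < Pinf" and Lfin: "\<forall>i\<in>L. Minf < l i"
    and zero: "\<forall>i\<in>{1..n} - (U \<union> L). \<alpha> i = 0"
    and bracket: "\<forall>i\<in>U \<union> L. lo i \<le> \<alpha> i \<and> \<alpha> i \<le> hi i"
  shows "valid_ineq n P (\<lambda>i. if i \<in> U then hi i else if i \<in> L then lo i else 0)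
           (\<beta> + (\<Sum>i\<in>{i\<in>U. u i > Fin 0}. (hi i - lo i) * fin_val (u i))
              + (\<Sum>i\<in>{i\<in>L. l i < Fin 0}. (lo i - hi i) * fin_val (l i)))"
proof -
  define t where "t i =
      (if i \<in> U \<and> u i > Fin 0 then (hi i - lo i) * fin_val (u i) else 0)
    + (if i \<in> L \<and> l i < Fin 0 then (lo i - hi i) * fin_val (l i) else 0)" for i
  have "{i\<in>{1..n}. i \<in> U \<and> u i > Fin 0} = {i\<in>U. u i > Fin 0}"
    "{i\<in>{1..n}. i \<in> L \<and> l i < Fin 0} = {i\<in>L. l i < Fin 0}"
    using UL by auto
  then have sum_t: "(\<Sum>i=1..n. t i) = (\<Sum>i\<in>{i\<in>U. u i > Fin 0}. (hi i - lo i) * fin_val (u i))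
      + (\<Sum>i\<in>{i\<in>L. l i < Fin 0}. (lo i - hi i) * fin_val (l i))"
    unfolding t_def by (simp add: sum.distrib flip: sum.inter_filter)
  let ?c = "\<lambda>i. if i \<in> U then hi i else if i \<in> L then lo i else 0"
  have coeff_le: "?c i * x i \<le> \<alpha> i * x i + t i" if "x \<in> P" "i \<in> {1..n}" for x i
  proof -
    consider "i \<in> U" | "i \<in> L" | "i \<notin> U \<union> L" by blast
    then show ?thesis
    proof cases
      case 1
      then show ?thesis
        using round_up_coeff_le[of "lo i" "\<alpha> i" "hi i" "x i" "u i"] bounds[OF that] UL(3)
          Ufin bracket unfolding t_def by auto
    next
      case 2
      then show ?thesis
        using round_down_coeff_le[of "lo i" "\<alpha> i" "hi i" "l i" "x i"] bounds[OF that] UL(3)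
          Lfin bracket unfolding t_def by auto
    qed (use that zero t_def in auto)
  qed
  have "valid_ineq n P ?c (\<beta> + (\<Sum>i=1..n. t i))"
    using valid coeff_le by (rule valid_ineq_perturb)
  then show ?thesis
    unfolding sum_t by (simp only: add.assoc)
qed

theorem corollary1:
  fixes F :: "rat set" and m n :: nat
    and A :: "nat \<Rightarrow> nat \<Rightarrow> rat" and b :: "nat \<Rightarrow> rat"
    and l u :: "nat \<Rightarrow> rat extended" and I U L :: "nat set"
    and a g :: "nat \<Rightarrow> rat" and \<beta> d lam :: rat
  assumes F0: "0 \<in> F"
    and I: "I \<subseteq> {1..n}"
    and va: "valid_ineq n (mip_feasible m n A b l u I) a \<beta>"
    and ra: "F_representable F n a \<beta>"
    and vg: "valid_ineq n (mip_feasible m n A b l u I) g d"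
    and rg: "F_representable F n g d"
    and lam: "lam \<in> F" "lam > 0"
    and UL: "U \<subseteq> {1..n}" "L \<subseteq> {1..n}" "U \<inter> L = {}"
    and Ufin: "\<forall>i\<in>U. u i < Pinf"
    and Lfin: "\<forall>i\<in>L. l i > Minf"
    and zero: "\<forall>i\<in>{1..n} - (U \<union> L). a i + lam * g i = 0"
    and ex_round: "\<forall>i\<in>U \<union> L. has_fl_up F (a i + lam * g i) \<and> has_fl_down F (a i + lam * g i)"
    and ex_rhs: "has_fl_up F (\<beta> + lam * d
        + (\<Sum>i\<in>{i\<in>U. u i > Fin 0}.
             (fl_up F (a i + lam * g i) - fl_down F (a i + lam * g i)) * fin_val (u i))
        + (\<Sum>i\<in>{i\<in>L. l i < Fin 0}.
             (fl_down F (a i + lam * g i) - fl_up F (a i + lam * g i)) * fin_val (l i)))"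
  shows "F_representable F n
           (\<lambda>i. if i \<in> U then fl_up F (a i + lam * g i)
                 else if i \<in> L then fl_down F (a i + lam * g i) else 0)
           (fl_up F (\<beta> + lam * d
              + (\<Sum>i\<in>{i\<in>U. u i > Fin 0}.
                   (fl_up F (a i + lam * g i) - fl_down F (a i + lam * g i)) * fin_val (u i))
              + (\<Sum>i\<in>{i\<in>L. l i < Fin 0}.
                   (fl_down F (a i + lam * g i) - fl_up F (a i + lam * g i)) * fin_val (l i))))
       \<and> valid_ineq n (mip_feasible m n A b l u I)
           (\<lambda>i. if i \<in> U then fl_up F (a i + lam * g i)
                 else if i \<in> L then fl_down F (a i + lam * g i) else 0)
           (fl_up F (\<beta> + lam * d
              + (\<Sum>i\<in>{i\<in>U. u i > Fin 0}.
                   (fl_up F (a i + lam * g i) - fl_down F (a i + lam * g i)) * fin_val (u i))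
              + (\<Sum>i\<in>{i\<in>L. l i < Fin 0}.
                   (fl_down F (a i + lam * g i) - fl_up F (a i + lam * g i)) * fin_val (l i))))"
proof -
  let ?\<alpha> = "\<lambda>i. a i + lam * g i"
  let ?P = "mip_feasible m n A b l u I"
  let ?c = "\<lambda>i. if i \<in> U then fl_up F (?\<alpha> i) else if i \<in> L then fl_down F (?\<alpha> i) else 0"
  let ?S = "\<beta> + lam * d
      + (\<Sum>i\<in>{i\<in>U. u i > Fin 0}. (fl_up F (?\<alpha> i) - fl_down F (?\<alpha> i)) * fin_val (u i))
      + (\<Sum>i\<in>{i\<in>L. l i < Fin 0}. (fl_down F (?\<alpha> i) - fl_up F (?\<alpha> i)) * fin_val (l i))"
  have bracket: "\<forall>i\<in>U \<union> L. fl_down F (?\<alpha> i) \<le> ?\<alpha> i \<and> ?\<alpha> i \<le> fl_up F (?\<alpha> i)"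
    using ex_round fl_up_mem_gt(2) fl_down_mem_lt(2) by (blast intro: less_imp_le)
  have "valid_ineq n ?P ?\<alpha> (\<beta> + lam * d)"
    using va vg lam(2) by (intro valid_ineq_aggregate) auto
  then have "valid_ineq n ?P ?c ?S"
    by (rule valid_ineq_round_coeffs)
      (use mip_feasible_bounds UL Ufin Lfin zero bracket in \<open>simp_all\<close>)
  then have "valid_ineq n ?P ?c (fl_up F ?S)"
    using fl_up_mem_gt(2)[OF ex_rhs] by (rule valid_ineq_rhs_mono[OF _ less_imp_le])
  moreover have "F_representable F n ?c (fl_up F ?S)"
    unfolding F_representable_def
    using F0 ex_round fl_up_mem_gt(1)[OF ex_rhs] fl_up_mem_gt(1) fl_down_mem_lt(1) by simp
  ultimately show ?thesis by blast
qed

end
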